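(* Let $a,b,c$ be positive numbers with $a<b<c$. Then $\mathcal D_{a,b,c}=\emptyset$ if and only if $Q_{a,b,c}<+\infty$.
   Context: For $a,b,c>0$ and $t\in\mathbb R$, $\mathbf M_{a,b,c}(t)=(\chi_{[0,c)}(t-\mu+\lambda))_{\mu\in a\mathbb Z,\lambda\in b\mathbb Z}$ is the infinite matrix with rows indexed by $a\mathbb Z$ and columns by $b\mathbb Z$, acting by $(\mathbf M_{a,b,c}(t)\mathbf x)(\mu)=\sum_{\lambda\in b\mathbb Z}\chi_{[0,c)}(t-\mu+\lambda)\mathbf x(\lambda)$. $\mathcal B_b$ is the set of vectors $(\mathbf x(\lambda))_{\lambda\in b\mathbb Z}$ with entries in $\{0,1\}$, and $\mathcal B_b^0=\{\mathbf x\in\mathcal B_b:\mathbf x(0)=1\}$. $\mathbf 2$ denotes the vector indexed by $a\mathbb Z$ all of whose entries are $2$. $\mathcal D_{a,b,c}=\{t\in\mathbb R:\mathbf M_{a,b,c}(t)\mathbf x=\mathbf 2\text{ for some }\mathbf x\in\mathcal B_b^0\}$. For $t\in\mathbb R$ and $\mathbf x\in\mathcal B_b$, let $K(t,\mathbf x)=\{\mu\in a\mathbb Z:(\mathbf M_{a,b,c}(t)\mathbf x)(\mu)=2\}$, let $Q_{a,b,c}(t,\mathbf x)=0$ if $K(t,\mathbf x)=\emptyset$ and otherwise $Q_{a,b,c}(t,\mathbf x)=\sup\{n\in\mathbb N:[\mu,\mu+na)\cap a\mathbb Z\subset K(t,\mathbf x)\text{ for some }\mu\in a\mathbb Z\}$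 (the maximal length of a run of consecutive entries equal to $2$), and $Q_{a,b,c}=\sup_{t\in\mathbb R}\sup_{\mathbf x\in\mathcal B_b}Q_{a,b,c}(t,\mathbf x)\in[0,+\infty]$. *)

theory Defs
  imports "HOL-Analysis.Analysis" "HOL-Library.Extended_Nat"
begin

text \<open>Rows are indexed by a*m (m :: int), columns by b*n (n :: int).
  A vector x indexed by bZ is a function int => real (x n is the entry at b*n).\<close>

definition Mmul :: "real \<Rightarrow> real \<Rightarrow> real \<Rightarrow> real \<Rightarrow> (int \<Rightarrow> real) \<Rightarrow> int \<Rightarrow> real" where
  "Mmul a b c t x m = infsum (\<lambda>n::int. indicator {0..<c} (t - a * of_int m + b * of_int n) * x n) UNIV"

definition Bvec :: "(int \<Rightarrow> real) set" where
  "Bvec = {x. \<forall>n. x n \<in> {0, 1}}"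

definition Bvec0 :: "(int \<Rightarrow> real) set" where
  "Bvec0 = {x \<in> Bvec. x 0 = 1}"

definition Dset :: "real \<Rightarrow> real \<Rightarrow> real \<Rightarrow> real set" where
  "Dset a b c = {t. \<exists>x \<in> Bvec0. \<forall>m. Mmul a b c t x m = 2}"

definition Kset :: "real \<Rightarrow> real \<Rightarrow> real \<Rightarrow> real \<Rightarrow> (int \<Rightarrow> real) \<Rightarrow> int set" where
  "Kset a b c t x = {m. Mmul a b c t x m = 2}"

definition Qtx :: "real \<Rightarrow> real \<Rightarrow> real \<Rightarrow> real \<Rightarrow> (int \<Rightarrow> real) \<Rightarrow> enat" where
  "Qtx a b c t x = (if Kset a b c t x = {} then 0
     else Sup {enat n | n. n \<ge> 1 \<and> (\<exists>m. {m..<m + int n} \<subseteq> Kset a b c t x)})"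

definition Q :: "real \<Rightarrow> real \<Rightarrow> real \<Rightarrow> enat" where
  "Q a b c = (SUP t \<in> UNIV. SUP x \<in> Bvec. Qtx a b c t x)"

end

theory Submission imports Defs begin

(* For a 0/1 vector x the entry (M(t) x)(m) counts the columns n with x n = 1
   whose shifted position t - a m + b n lies in the window [0,c); we call this finite set
   the row support.  If t lies in D, every row equals 2, so the run of 2's is infinite and
   Q = \<infinity>.  Conversely, if Q = \<infinity> there are arbitrarily long runs of rows equal to 2.
   Shifting rows and columns (which leaves the row supports invariant up to translation),
   every such run can be centred so that t \<in> [0,c) and column 0 is active: a "centred run".
   The pairs (t, x) of centred runs of length k live in the compact set [0,c] \<times> {0,1}^\<int>,
   so a subsequence converges to some (t, x).  Row by row, the row support of the sequence
   eventually agrees with that of the limit, taken with the window [0,c) when the sequence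
   approaches t from above and with the window (0,c] when it approaches from below.
   In the second case the reflection n \<mapsto> -n, t \<mapsto> c - t turns (0,c] back into [0,c).
   Either way we obtain an element of D. *)

section \<open>Row supports\<close>

definition row_support :: "real set \<Rightarrow> real \<Rightarrow> real \<Rightarrow> real \<Rightarrow> (int \<Rightarrow> real) \<Rightarrow> int \<Rightarrow> int set" where
  "row_support I a b t x m = {n. x n = 1 \<and> t - a * of_int m + b * of_int n \<in> I}"

lemma finite_band:
  fixes b lo hi :: real assumes "b > 0"
  shows "finite {n::int. lo \<le> b * of_int n \<and> b * of_int n \<le> hi}"
proof -
  have "{n::int. lo \<le> b * of_int n \<and> b * of_int n \<le> hi} \<subseteq> {\<lfloor>lo / b\<rfloor> .. \<lceil>hi / b\<rceil>}"
  proof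
    fix n :: int assume "n \<in> {n::int. lo \<le> b * of_int n \<and> b * of_int n \<le> hi}"
    then have "lo / b \<le> of_int n" "of_int n \<le> hi / b" using assms
      by (auto simp: field_simps mult.commute)
    then show "n \<in> {\<lfloor>lo / b\<rfloor> .. \<lceil>hi / b\<rceil>}"
      by (auto simp: floor_le_iff le_ceiling_iff)
  qed
  then show ?thesis by (rule finite_subset) simp
qed

lemma row_support_subset_band:
  assumes "I \<subseteq> {lo..hi}"
  shows "row_support I a b t x m \<subseteq> {n. lo + a * of_int m - t \<le> b * of_int n \<and> b * of_int n \<le> hi + a * of_int m - t}"
  using assms unfolding row_support_def by auto

lemma finite_row_support:
  assumes "b > 0" "I \<subseteq> {lo..hi}"
  shows "finite (row_support I a b t x m)"
  using finite_subset[OF row_support_subset_band[OF assms(2)] finite_band[OF assms(1)]] .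

lemma Mmul_eq_card:
  assumes "b > 0" "x \<in> Bvec"
  shows "Mmul a b c t x m = real (card (row_support {0..<c} a b t x m))"
proof -
  let ?S = "row_support {0..<c} a b t x m"
  let ?g = "\<lambda>n::int. indicator {0..<c} (t - a * of_int m + b * of_int n) * x n :: real"
  have g: "?g n = (if n \<in> ?S then 1 else 0)" for n
    using assms(2) unfolding row_support_def Bvec_def indicator_def
    by (cases "x n = 0") auto
  have "Mmul a b c t x m = infsum ?g ?S"
    unfolding Mmul_def by (rule infsum_cong_neutral) (auto simp: g)
  also have "\<dots> = sum ?g ?S"
    using finite_row_support[OF assms(1) atLeastLessThan_subseteq_atLeastAtMost_iff[of 0 c 0 c, THEN iffD2]]
    by simp
  also have "\<dots> = real (card ?S)" by (simp add: g)
  finally show ?thesis .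
qed

lemma card_row_support_shift:
  "card (row_support I a b (t - a * of_int k + b * of_int j) (\<lambda>n. x (n + j)) m)
     = card (row_support I a b t x (m + k))"
proof -
  have "row_support I a b (t - a * of_int k + b * of_int j) (\<lambda>n. x (n + j)) m
      = (\<lambda>n. n - j) ` row_support I a b t x (m + k)"
    unfolding row_support_def by (force simp: algebra_simps image_iff)
  then show ?thesis by (simp add: card_image inj_on_def)
qed

lemma card_row_support_reflect:
  "card (row_support {0..<c} a b (c - t) (\<lambda>n. x (- n)) m)
     = card (row_support {0<..c} a b t x (- m))"
proof -
  have "row_support {0..<c} a b (c - t) (\<lambda>n. x (- n)) m = uminus ` row_support {0<..c} a b t x (- m)"
    unfolding row_support_def by (force simp: algebra_simps image_iff)
  then show ?thesis by (simp add: card_image inj_on_def)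
qed

section \<open>Stability of windows under limits\<close>

lemma eventually_window_from_above:
  fixes u :: "nat \<Rightarrow> real"
  assumes "u \<longlonglongrightarrow> \<alpha>"
  shows "\<forall>\<^sub>F k in sequentially. \<alpha> \<le> u k \<longrightarrow> (u k \<in> {0..<c} \<longleftrightarrow> \<alpha> \<in> {0..<c})"
proof (cases "\<alpha> < 0")
  case True
  then have "\<forall>\<^sub>F k in sequentially. u k < 0" using assms order_tendstoD(2) by blast
  then show ?thesis by eventually_elim (use True in auto)
next
  case nonneg: False
  show ?thesis
  proof (cases "\<alpha> < c")
    case True
    then have "\<forall>\<^sub>F k in sequentially. u k < c" using assms order_tendstoD(2) by blast
    then show ?thesis by eventually_elim (use True nonneg in auto)
  qed auto
qed

lemma eventually_window_from_below:
  fixes u :: "nat \<Rightarrow> real"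
  assumes "u \<longlonglongrightarrow> \<alpha>"
  shows "\<forall>\<^sub>F k in sequentially. u k < \<alpha> \<longrightarrow> (u k \<in> {0..<c} \<longleftrightarrow> \<alpha> \<in> {0<..c})"
proof (cases "c < \<alpha>")
  case True
  then have "\<forall>\<^sub>F k in sequentially. c < u k" using assms order_tendstoD(1) by blast
  then show ?thesis by eventually_elim (use True in auto)
next
  case le_c: False
  show ?thesis
  proof (cases "0 < \<alpha>")
    case True
    then have "\<forall>\<^sub>F k in sequentially. 0 < u k" using assms order_tendstoD(1) by blast
    then show ?thesis by eventually_elim (use True le_c in auto)
  qed auto
qed

text \<open>This is where finiteness of the row supports is used.\<close>
lemma row_support_eventually:
  fixes T :: "nat \<Rightarrow> real" and X :: "nat \<Rightarrow> int \<Rightarrow> real"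
  assumes b: "b > 0" and T: "\<And>k. T k \<in> {0..c}" and t: "t \<in> {0..c}"
    and limT: "T \<longlonglongrightarrow> t" and limX: "\<And>n. \<forall>\<^sub>F k in sequentially. X k n = x n"
  shows "\<forall>\<^sub>F k in sequentially. row_support {0..<c} a b (T k) (X k) m
           = row_support (if t \<le> T k then {0..<c} else {0<..c}) a b t x m"
proof -
  define F where "F = {n::int. a * of_int m - c \<le> b * of_int n \<and> b * of_int n \<le> a * of_int m + c}"
  have finF: "finite F" unfolding F_def by (rule finite_band[OF b])
  have in_F: "row_support I a b s y m \<subseteq> F" if "I \<subseteq> {0..c}" "s \<in> {0..c}" for I s y
    using row_support_subset_band[OF that(1)] that(2) unfolding F_def by fastforce
  have "\<forall>\<^sub>F k in sequentially. \<forall>n\<in>F. X k n = x n \<and>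
          (T k - a * of_int m + b * of_int n \<in> {0..<c} \<longleftrightarrow>
           t - a * of_int m + b * of_int n \<in> (if t \<le> T k then {0..<c} else {0<..c}))"
  proof (rule eventually_ball_finite[OF finF], intro ballI)
    fix n
    have lim: "(\<lambda>k. T k - a * of_int m + b * of_int n) \<longlonglongrightarrow> t - a * of_int m + b * of_int n"
      by (intro tendsto_intros limT)
    show "\<forall>\<^sub>F k in sequentially. X k n = x n \<and>
          (T k - a * of_int m + b * of_int n \<in> {0..<c} \<longleftrightarrow>
           t - a * of_int m + b * of_int n \<in> (if t \<le> T k then {0..<c} else {0<..c}))"
      using limX[of n] eventually_window_from_above[OF lim, of c] eventually_window_from_below[OF lim, of c]
      by eventually_elim auto
  qed
  then show ?thesis
  proof eventually_elim
    case (elim k)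
    have "row_support {0..<c} a b (T k) (X k) m \<subseteq> F" using T[of k] by (intro in_F) auto
    moreover have "row_support (if t \<le> T k then {0..<c} else {0<..c}) a b t x m \<subseteq> F"
      using t by (intro in_F) auto
    ultimately show ?case
    proof (intro set_eqI)
      fix n
      assume "row_support {0..<c} a b (T k) (X k) m \<subseteq> F"
        "row_support (if t \<le> T k then {0..<c} else {0<..c}) a b t x m \<subseteq> F"
      then show "n \<in> row_support {0..<c} a b (T k) (X k) m
          \<longleftrightarrow> n \<in> row_support (if t \<le> T k then {0..<c} else {0<..c}) a b t x m"
        using elim unfolding row_support_def by (cases "n \<in> F") auto
    qed
  qed
qed

section \<open>Compactness\<close>

lemma compact_Bvec: "compact Bvec"
proof -
  have "Bvec = PiE UNIV (\<lambda>_. {0, 1::real})"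
    unfolding Bvec_def by (auto simp: PiE_def extensional_def)
  moreover have "compactin (product_topology (\<lambda>_. euclidean) UNIV) (PiE (UNIV::int set) (\<lambda>_. {0, 1::real}))"
    by (subst compactin_PiE) auto
  ultimately show ?thesis
    by (simp add: euclidean_product_topology)
qed

lemma eventually_eq_limit_01:
  fixes f :: "nat \<Rightarrow> real"
  assumes "f \<longlonglongrightarrow> l" "\<And>k. f k \<in> {0,1}" "l \<in> {0,1}"
  shows "\<forall>\<^sub>F k in sequentially. f k = l"
proof -
  have "\<forall>\<^sub>F k in sequentially. dist (f k) l < 1/2"
    using assms(1) by (rule tendstoD) simp
  then show ?thesis
  proof eventually_elim
    case (elim k)
    then show ?case using assms(2)[of k] assms(3) by (auto simp: dist_real_def)
  qed
qed

text \<open>Bolzano-Weierstrass for [0,c] \<times> {0,1}^\<int>: convergence of the vector part means that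
  every coordinate is eventually constant.\<close>
lemma convergent_subsequence:
  fixes T :: "nat \<Rightarrow> real" and X :: "nat \<Rightarrow> int \<Rightarrow> real"
  assumes T: "\<And>k. T k \<in> {0..c}" and X: "\<And>k. X k \<in> Bvec"
  obtains r t x where "strict_mono r" "t \<in> {0..c}" "x \<in> Bvec" "(\<lambda>k. T (r k)) \<longlonglongrightarrow> t"
    "\<And>n. \<forall>\<^sub>F k in sequentially. X (r k) n = x n"
proof -
  have "seq_compact ({0..c} \<times> Bvec)"
    by (intro compact_imp_seq_compact compact_Times compact_Icc compact_Bvec)
  moreover have "\<forall>k. (T k, X k) \<in> {0..c} \<times> Bvec" using T X by auto
  ultimately obtain l r where l: "l \<in> {0..c} \<times> Bvec" and r: "strict_mono r"
    and lim: "((\<lambda>k. (T k, X k)) \<circ> r) \<longlonglongrightarrow> l"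
    by (rule seq_compactE)
  obtain t x where l_eq: "l = (t, x)" by (cases l)
  have limT: "(\<lambda>k. T (r k)) \<longlonglongrightarrow> t"
    using tendsto_fst[OF lim] l_eq by (simp add: o_def)
  have limX: "(\<lambda>k. X (r k)) \<longlonglongrightarrow> x"
    using tendsto_snd[OF lim] l_eq by (simp add: o_def)
  have "\<forall>\<^sub>F k in sequentially. X (r k) n = x n" for n
  proof (rule eventually_eq_limit_01)
    show "(\<lambda>k. X (r k) n) \<longlonglongrightarrow> x n"
      using continuous_on_tendsto_compose[OF continuous_on_product_coordinates limX]
      by (simp add: o_def)
  qed (use X l l_eq in \<open>auto simp: Bvec_def\<close>)
  then show ?thesis using that r l l_eq limT by blast
qed

section \<open>Centred runs and their limit\<close>

definition centred_run :: "real \<Rightarrow> real \<Rightarrow> real \<Rightarrow> nat \<Rightarrow> real \<Rightarrow> (int \<Rightarrow> real) \<Rightarrow> bool" where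
  "centred_run a b c k T X \<longleftrightarrow> T \<in> {0..<c} \<and> X \<in> Bvec0 \<and>
     (\<forall>i. \<bar>i\<bar> \<le> int k \<longrightarrow> card (row_support {0..<c} a b T X i) = 2)"

text \<open>Any run of 2k+1 rows equal to 2 can be translated into a centred run: pick an active
  column n0 of the middle row and shift it to column 0.\<close>
lemma centred_run_from_run:
  assumes b: "b > 0" and x: "x \<in> Bvec"
    and run: "\<And>i. \<bar>i\<bar> \<le> int k \<Longrightarrow> Mmul a b c t x (i + m0) = 2"
  shows "\<exists>T X. centred_run a b c k T X"
proof -
  have row: "card (row_support {0..<c} a b t x (i + m0)) = 2" if "\<bar>i\<bar> \<le> int k" for i
    using run[OF that] Mmul_eq_card[OF b x] by simp
  then have "row_support {0..<c} a b t x m0 \<noteq> {}" using row[of 0] by fastforce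
  then obtain n0 where n0: "n0 \<in> row_support {0..<c} a b t x m0" by blast
  define T where "T = t - a * of_int m0 + b * of_int n0"
  define X where "X = (\<lambda>n. x (n + n0))"
  have "T \<in> {0..<c}" "X \<in> Bvec0"
    using n0 x unfolding T_def X_def row_support_def Bvec0_def Bvec_def by auto
  moreover have "card (row_support {0..<c} a b T X i) = 2" if "\<bar>i\<bar> \<le> int k" for i
    unfolding T_def X_def card_row_support_shift using row[OF that] .
  ultimately show ?thesis unfolding centred_run_def by blast
qed

lemma limit_of_centred_runs:
  assumes b: "b > 0" and runs: "\<And>k. centred_run a b c k (T k) (X k)"
  obtains t x S where "x \<in> Bvec0"
    "\<And>m. \<forall>\<^sub>F k in sequentially.
       card (row_support (if t \<le> S k then {0..<c} else {0<..c}) a b t x m) = 2"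
proof -
  have T: "T k \<in> {0..c}" and X: "X k \<in> Bvec0" for k
    using runs[of k] unfolding centred_run_def by auto
  obtain r t x where r: "strict_mono r" and t: "t \<in> {0..c}" and x: "x \<in> Bvec"
    and limT: "(\<lambda>k. T (r k)) \<longlonglongrightarrow> t" and limX: "\<And>n. \<forall>\<^sub>F k in sequentially. X (r k) n = x n"
    by (rule convergent_subsequence[of T c X]) (use T X in \<open>auto simp: Bvec0_def\<close>)
  have "x 0 = 1"
    using eventually_happens'[OF _ limX[of 0]] X unfolding Bvec0_def by auto
  then have x0: "x \<in> Bvec0" using x unfolding Bvec0_def by auto
  have "\<forall>\<^sub>F k in sequentially.
      card (row_support (if t \<le> T (r k) then {0..<c} else {0<..c}) a b t x m) = 2" for m
  proof -
    have "\<forall>\<^sub>F k in sequentially. \<bar>m\<bar> \<le> int k" by (rule eventually_sequentiallyI[of "nat \<bar>m\<bar>"]) auto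
    then have "\<forall>\<^sub>F k in sequentially. \<bar>m\<bar> \<le> int (r k)"
      by eventually_elim (use seq_suble[OF r] in \<open>meson of_nat_le_iff order_trans\<close>)
    moreover have "\<forall>\<^sub>F k in sequentially. row_support {0..<c} a b (T (r k)) (X (r k)) m
           = row_support (if t \<le> T (r k) then {0..<c} else {0<..c}) a b t x m"
      by (rule row_support_eventually[OF b _ t limT limX]) (use T in auto)
    ultimately show ?thesis
    proof eventually_elim
      case (elim k)
      have "card (row_support {0..<c} a b (T (r k)) (X (r k)) m) = 2"
        using runs[of "r k"] elim(1) unfolding centred_run_def by blast
      then show ?case by (simp only: elim(2))
    qed
  qed
  with x0 show ?thesis by (rule that)
qed

text \<open>The limit step: from centred runs of every length we obtain a 0/1 vector with x 0 = 1
  all of whose rows equal 2.  If the limit is approached from below, the window (0,c] is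
  turned back into [0,c) by reflection.\<close>
lemma all_rows_two_from_centred_runs:
  assumes b: "b > 0" and runs: "\<And>k. centred_run a b c k (T k) (X k)"
  shows "\<exists>t y. y \<in> Bvec0 \<and> (\<forall>m. card (row_support {0..<c} a b t y m) = 2)"
proof -
  obtain t x S where x: "x \<in> Bvec0" and limit_rows: "\<And>m. \<forall>\<^sub>F k in sequentially.
       card (row_support (if t \<le> S k then {0..<c} else {0<..c}) a b t x m) = 2"
    using limit_of_centred_runs[OF b runs] by blast
  have along_side: "\<forall>m. card (row_support (if P then {0..<c} else {0<..c}) a b t x m) = 2"
    if side: "\<exists>\<^sub>F k in sequentially. (t \<le> S k) = P" for P
  proof
    fix m
    obtain k where "(t \<le> S k) = P"
      and "card (row_support (if t \<le> S k then {0..<c} else {0<..c}) a b t x m) = 2"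
      using frequently_ex[OF frequently_eventually_frequently[OF side limit_rows[of m]]] by blast
    then show "card (row_support (if P then {0..<c} else {0<..c}) a b t x m) = 2" by simp
  qed
  consider "\<exists>\<^sub>F k in sequentially. t \<le> S k" | "\<exists>\<^sub>F k in sequentially. \<not> t \<le> S k"
    using not_frequently eventually_frequently[OF sequentially_bot] by blast
  then show ?thesis
  proof cases
    case 1
    then have "\<forall>m. card (row_support {0..<c} a b t x m) = 2"
      using along_side[of True] by simp
    then show ?thesis using x by blast
  next
    case 2
    then have "\<forall>m. card (row_support {0<..c} a b t x m) = 2"
      using along_side[of False] by simp
    then have "card (row_support {0..<c} a b (c - t) (\<lambda>n. x (- n)) m) = 2" for m
      unfolding card_row_support_reflect by simp
    moreover have "(\<lambda>n. x (- n)) \<in> Bvec0" using x unfolding Bvec0_def Bvec_def by auto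
    ultimately show ?thesis by blast
  qed
qed

lemma Qtx_le_Q:
  assumes "x \<in> Bvec"
  shows "Qtx a b c t x \<le> Q a b c"
proof -
  have "Qtx a b c t x \<le> (SUP y\<in>Bvec. Qtx a b c t y)" using assms by (rule SUP_upper)
  also have "\<dots> \<le> Q a b c" unfolding Q_def by (rule SUP_upper) simp
  finally show ?thesis .
qed

lemma Qtx_infinite:
  assumes "\<forall>m. Mmul a b c t x m = 2"
  shows "Qtx a b c t x = \<infinity>"
proof -
  have K: "Kset a b c t x = UNIV" using assms unfolding Kset_def by auto
  have runs: "{enat n | n. n \<ge> 1 \<and> (\<exists>m. {m..<m + int n} \<subseteq> Kset a b c t x)} = enat ` {1..}"
    unfolding K by auto
  have "infinite (enat ` {1::nat..})"
    using finite_imageD[of enat "{1::nat..}"] infinite_Ici[of "1::nat"] by (auto simp: inj_on_def)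
  then show ?thesis unfolding Qtx_def runs Sup_enat_def using K by auto
qed

lemma Dset_nonempty_imp_Q_infinite:
  assumes "t \<in> Dset a b c"
  shows "Q a b c = \<infinity>"
proof -
  obtain x where x: "x \<in> Bvec0" and rows: "\<forall>m. Mmul a b c t x m = 2"
    using assms unfolding Dset_def by auto
  have "Qtx a b c t x \<le> Q a b c" using x by (intro Qtx_le_Q) (simp add: Bvec0_def)
  then show ?thesis using Qtx_infinite[OF rows] by simp
qed

lemma Q_infinite_imp_long_run:
  assumes "Q a b c = \<infinity>"
  shows "\<exists>t x m. x \<in> Bvec \<and> {m..<m + int n} \<subseteq> Kset a b c t x"
proof -
  have "enat n < Q a b c" using assms by simp
  then obtain t x where x: "x \<in> Bvec" and lt: "enat n < Qtx a b c t x"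
    unfolding Q_def by (auto simp: less_SUP_iff)
  then have "Kset a b c t x \<noteq> {}" unfolding Qtx_def by (auto split: if_splits)
  then have "enat n < Sup {enat n | n. n \<ge> 1 \<and> (\<exists>m. {m..<m + int n} \<subseteq> Kset a b c t x)}"
    using lt unfolding Qtx_def by simp
  then obtain n' m where "n < n'" and "{m..<m + int n'} \<subseteq> Kset a b c t x"
    by (auto simp: less_Sup_iff)
  then have "{m..<m + int n} \<subseteq> Kset a b c t x" by auto
  then show ?thesis using x by blast
qed

lemma Q_infinite_imp_Dset_nonempty:
  assumes b: "b > 0" and Q: "Q a b c = \<infinity>"
  shows "Dset a b c \<noteq> {}"
proof -
  have "\<exists>T X. centred_run a b c k T X" for k
  proof -
    obtain t x m where x: "x \<in> Bvec" and run: "{m..<m + int (2 * k + 1)} \<subseteq> Kset a b c t x"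
      using Q_infinite_imp_long_run[OF Q] by blast
    have "Mmul a b c t x (i + (m + int k)) = 2" if "\<bar>i\<bar> \<le> int k" for i
    proof -
      have "i + (m + int k) \<in> {m..<m + int (2 * k + 1)}" using that by auto
      then show ?thesis using run unfolding Kset_def by blast
    qed
    then show ?thesis by (rule centred_run_from_run[OF b x])
  qed
  then obtain T X where "\<And>k. centred_run a b c k (T k) (X k)" by metis
  then obtain t y where y: "y \<in> Bvec0" and rows: "\<forall>m. card (row_support {0..<c} a b t y m) = 2"
    using all_rows_two_from_centred_runs[OF b] by blast
  have "\<forall>m. Mmul a b c t y m = 2"
    using rows Mmul_eq_card[OF b] y unfolding Bvec0_def by simp
  then have "t \<in> Dset a b c" using y unfolding Dset_def by blast
  then show ?thesis by blast
qed

theorem lemma3p4: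
  fixes a b c :: real
  assumes "0 < a" "a < b" "b < c"
  shows "Dset a b c = {} \<longleftrightarrow> Q a b c < \<infinity>"
proof -
  have b: "b > 0" using assms by linarith
  have "Dset a b c \<noteq> {} \<longleftrightarrow> Q a b c = \<infinity>"
  proof
    assume "Dset a b c \<noteq> {}"
    then obtain t where "t \<in> Dset a b c" by blast
    then show "Q a b c = \<infinity>" by (rule Dset_nonempty_imp_Q_infinite)
  next
    assume "Q a b c = \<infinity>"
    then show "Dset a b c \<noteq> {}" by (rule Q_infinite_imp_Dset_nonempty[OF b])
  qed
  then show ?thesis by auto
qed

end
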